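(* For every finite alphabet $\Sigma$, $L_{\mathrm{UNIQ}}=\Sigma^*\setminus L_{\mathrm{OBST}}$.
   Context: Let $\Sigma$ be a finite alphabet and $\$\notin\Sigma$ a delimiter symbol; $\Sigma_\$=\Sigma\cup\{\$\}$. The bigram map $\Phi$ sends a string $z\in\$\Sigma^*\$$ to the vector $\Phi(z)\in\mathbb{N}^{\Sigma_\$^2}$ whose $(i,j)$ entry is the number of positions at which the two-letter string $ij$ occurs as a contiguous factor of $z$ (counting overlaps). $L_{\mathrm{UNIQ}}$ is the set of $w\in\Sigma^*$ such that the only $z\in\$\Sigma^*\$$ with $\Phi(z)=\Phi(\$w\$)$ is $z=\$w\$$ ("uniquely decodable" strings). For $x\in\Sigma$ write $\Sigma_{\neg x}=\Sigma\setminus\{x\}$. For $x\in\Sigma$ and $a,b\in\Sigma_{\neg x}$ (with $a=b$ allowed) define $I_{x,a,b}=\Sigma^*\,a\,x\,\Sigma_{\neg a}^*\,b\,\Sigma^*$, $J_{x,a,b}=\Sigma^*\,a\,\Sigma_{\neg x}^*\,b\,\Sigma^*$ (regular-expression notation), $K_{x,a,b}=I_{x,a,b}\cap J_{x,a,b}$, and $L_{\mathrm{OBST}}=\bigcup_{x\in\Sigma}\bigcup_{a,b\in\Sigma_{\neg x}}K_{x,a,b}$. *)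

theory Defs
  imports Main
begin

text \<open>Alphabet: a finite type 'a. Extended alphabet \<Sigma>_$ is 'a option, with None the delimiter $.\<close>

definition delim :: "'a list \<Rightarrow> 'a option list" where
  "delim w = [None] @ map Some w @ [None]"

definition bigram :: "'b list \<Rightarrow> ('b \<times> 'b) \<Rightarrow> nat" where
  "bigram z = (\<lambda>(i, j). card {k. Suc k < length z \<and> z ! k = i \<and> z ! Suc k = j})"

definition L_UNIQ :: "('a::finite) list set" where
  "L_UNIQ = {w. \<forall>z. (\<exists>v. z = delim v) \<and> bigram z = bigram (delim w) \<longrightarrow> z = delim w}"

definition I_lang :: "'a \<Rightarrow> 'a \<Rightarrow> 'a \<Rightarrow> 'a list set" where
  "I_lang x a b = {u @ [a, x] @ m @ [b] @ v | u m v. set m \<subseteq> - {a}}"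

definition J_lang :: "'a \<Rightarrow> 'a \<Rightarrow> 'a \<Rightarrow> 'a list set" where
  "J_lang x a b = {u @ [a] @ m @ [b] @ v | u m v. set m \<subseteq> - {x}}"

definition K_lang :: "'a \<Rightarrow> 'a \<Rightarrow> 'a \<Rightarrow> 'a list set" where
  "K_lang x a b = I_lang x a b \<inter> J_lang x a b"

definition L_OBST :: "('a::finite) list set" where
  "L_OBST = (\<Union>x. \<Union>a\<in>- {x}. \<Union>b\<in>- {x}. K_lang x a b)"

end

theory Submission
  imports Defs "HOL-Library.Multiset"
begin

(* We work with the multiset of bigrams of a list instead of the count vector
   'bigram'; both carry the same information (bigram_eq_iff_bigrams).

   Obstructed strings are ambiguous: a string in K_lang x a b contains two
   disjoint blocks, one starting with "a x" and one with "a y" (y <> x), each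
   running from an occurrence of a to an occurrence of b.  Exchanging the two
   blocks preserves all bigrams but changes the string (swap_positions_not_uniq).

   Unobstructed strings are unique: write both decodings as "None # rdelim w"
   with rdelim w = map Some w @ [None].  They start with the same letter, and
   we peel off common first letters by induction (not_obst_determined).  At
   the first position where they differ, "c d ..." versus "c e ...", the string
   c # d # w is shown to be obstructed (first_divergence_obstructed) by a case
   analysis on where the bigram "c e" occurs in it; the only case yielding no
   obstruction directly is excluded by a "trap" argument: a set of letters
   that, once entered, is never left in one string is never left in the other. *)

section \<open>Bigram multisets\<close>

definition bigrams :: "'b list \<Rightarrow> ('b \<times> 'b) multiset" where
  "bigrams s = mset (zip s (tl s))"

lemma bigrams_Nil [simp]: "bigrams [] = {#}"
  and bigrams_single [simp]: "bigrams [x] = {#}"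
  and bigrams_Cons2 [simp]: "bigrams (x # y # r) = add_mset (x, y) (bigrams (y # r))"
  by (simp_all add: bigrams_def)

lemma bigrams_Cons: "s \<noteq> [] \<Longrightarrow> bigrams (x # s) = add_mset (x, hd s) (bigrams s)"
  by (cases s) simp_all

lemma size_bigrams: "size (bigrams s) = length s - 1"
  by (simp add: bigrams_def)

lemma bigrams_append:
  "u \<noteq> [] \<Longrightarrow> v \<noteq> [] \<Longrightarrow> bigrams (u @ v) = bigrams u + bigrams v + {#(last u, hd v)#}"
proof (induction u)
  case Nil
  then show ?case by simp
next
  case (Cons x u)
  then show ?case
    by (cases "u = []") (simp_all add: bigrams_Cons)
qed

lemma bigram_count:
  fixes z :: "'b list"
  shows "bigram z = count (bigrams z)"
proof
  fix p :: "'b \<times> 'b"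
  obtain i j where p: "p = (i, j)" by fastforce
  have "count (bigrams z) p = length (filter ((=) p) (zip z (tl z)))"
    by (simp add: bigrams_def count_mset count_list_eq_length_filter)
  also have "\<dots> = card {k. k < length (zip z (tl z)) \<and> p = zip z (tl z) ! k}"
    by (simp add: length_filter_conv_card)
  also have "{k. k < length (zip z (tl z)) \<and> p = zip z (tl z) ! k}
      = {k. Suc k < length z \<and> z ! k = i \<and> z ! Suc k = j}"
    by (auto simp: p nth_tl)
  finally show "bigram z p = count (bigrams z) p" by (simp add: bigram_def p)
qed

lemma bigram_eq_iff_bigrams: "bigram z = bigram z' \<longleftrightarrow> bigrams z = bigrams z'"
  by (simp add: bigram_count multiset_eq_iff fun_eq_iff)

section \<open>Obstructed strings are ambiguous\<close>

lemma bigrams_swap_blocks: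
  assumes "A \<noteq> []" "B \<noteq> []" "\<beta> \<noteq> []" "hd A = hd B" "hd (M @ B) = hd \<beta>"
  shows "bigrams (\<alpha> @ A @ M @ B @ \<beta>) = bigrams (\<alpha> @ B @ M @ A @ \<beta>)"
proof -
  have core: "bigrams (A @ M @ B @ \<beta>) = bigrams (B @ M @ A @ \<beta>)"
    using assms by (cases "M = []") (simp_all add: bigrams_append ac_simps)
  show ?thesis
    using core assms by (cases "\<alpha> = []") (simp_all add: bigrams_append)
qed

lemma nth_one_append_same_head:
  "B \<noteq> [] \<Longrightarrow> X \<noteq> [] \<Longrightarrow> Y \<noteq> [] \<Longrightarrow> hd X = hd Y \<Longrightarrow> (B @ X) ! 1 = (B @ Y) ! 1"
  by (cases B; cases "tl B") (auto simp: hd_conv_nth)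

lemma swap_positions_not_uniq:
  fixes w :: "'a::finite list"
  assumes "p < q" "q \<le> r" "r < s" "s < length w"
    and "w ! p = w ! r" "w ! q = w ! s" "w ! Suc p \<noteq> w ! Suc r"
  shows "w \<notin> L_UNIQ"
proof -
  define \<alpha> A M B \<beta> where "\<alpha> = take p w" and "A = take (q - p) (drop p w)"
    and "M = take (r - q) (drop q w)" and "B = take (s - r) (drop r w)" and "\<beta> = drop s w"
  have w: "w = \<alpha> @ A @ M @ B @ \<beta>"
  proof -
    have "take q w = \<alpha> @ A" using take_add[of p "q - p" w] assms by (simp add: \<alpha>_def A_def)
    moreover have "take r w = take q w @ M" using take_add[of q "r - q" w] assms by (simp add: M_def)
    moreover have "take s w = take r w @ B" using take_add[of r "s - r" w] assms by (simp add: B_def)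
    ultimately show ?thesis by (metis append_assoc append_take_drop_id \<beta>_def)
  qed
  have len: "length \<alpha> = p" "length A = q - p" "length M = r - q" "length B = s - r"
    using assms by (simp_all add: \<alpha>_def A_def M_def B_def)
  have ne: "A \<noteq> []" "B \<noteq> []" "\<beta> \<noteq> []" using len assms by (auto simp: \<beta>_def)
  have hd_A: "hd A = w ! p" and hd_B: "hd B = w ! r" and hd_\<beta>: "hd \<beta> = w ! s"
    using assms by (simp_all add: A_def B_def \<beta>_def hd_drop_conv_nth)
  have hd_M: "hd (M @ B) = w ! q"
  proof (cases "q < r")
    case True
    then show ?thesis using assms len by (simp add: M_def hd_drop_conv_nth)
  next
    case False
    then show ?thesis using assms len hd_B by simp
  qed
  define v where "v = \<alpha> @ B @ M @ A @ \<beta>"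
  have "bigrams ((None # map Some \<alpha>) @ map Some A @ map Some M @ map Some B @ (map Some \<beta> @ [None]))
      = bigrams ((None # map Some \<alpha>) @ map Some B @ map Some M @ map Some A @ (map Some \<beta> @ [None]))"
    by (rule bigrams_swap_blocks)
      (use ne hd_A hd_B hd_\<beta> hd_M assms in \<open>simp_all add: hd_map flip: map_append\<close>)
  then have same_bigrams: "bigram (delim v) = bigram (delim w)"
    by (simp add: bigram_eq_iff_bigrams delim_def v_def w)
  have "hd (M @ A @ \<beta>) = hd (M @ B @ \<beta>)" "hd (M @ B @ \<beta>) = hd (M @ B)"
    using ne hd_A hd_B assms by (cases M; simp)+
  then have "(B @ M @ A @ \<beta>) ! 1 = (B @ \<beta>) ! 1"
    using ne hd_M hd_\<beta> assms by (intro nth_one_append_same_head) simp_all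
  moreover have "v ! Suc p = (B @ M @ A @ \<beta>) ! 1"
    using nth_append_length_plus[of \<alpha> "B @ M @ A @ \<beta>" 1] len by (simp add: v_def)
  moreover have "w ! Suc r = (B @ \<beta>) ! 1"
    using nth_append_length_plus[of "\<alpha> @ A @ M" "B @ \<beta>" 1] len assms w by simp
  ultimately have "v ! Suc p = w ! Suc r" by simp
  then have "delim v \<noteq> delim w" using assms by (auto simp: delim_def)
  with same_bigrams show ?thesis unfolding L_UNIQ_def by blast
qed

lemma factor_positions:
  assumes "w = u @ a # m @ b # v"
  shows "w ! length u = a" and "w ! Suc (length u + length m) = b"
    and "Suc (length u + length m) < length w"
    and "\<And>t. length u < t \<Longrightarrow> t < Suc (length u + length m) \<Longrightarrow> w ! t \<in> set m"
proof -
  show "w ! length u = a" "w ! Suc (length u + length m) = b" "Suc (length u + length m) < length w"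
    using assms by (simp_all add: nth_append)
  fix t assume "length u < t" "t < Suc (length u + length m)"
  then have t: "t = Suc (length u) + (t - Suc (length u))" "t - Suc (length u) < length m"
    by arith+
  have "w ! t = (a # m @ b # v) ! Suc (t - Suc (length u))"
    using nth_append_length_plus[of u "a # m @ b # v"] t(1) assms by (metis add_Suc_right add_Suc)
  then show "w ! t \<in> set m" using t(2) by (simp add: nth_append)
qed

lemma I_lang_positions:
  assumes "w \<in> I_lang x a b"
  obtains i j where "Suc i < j" "j < length w" "w ! i = a" "w ! Suc i = x" "w ! j = b"
    "\<And>t. Suc i < t \<Longrightarrow> t < j \<Longrightarrow> w ! t \<noteq> a"
proof -
  obtain u m v where w: "w = (u @ [a]) @ x # m @ b # v" and m: "a \<notin> set m"
    using assms by (auto simp: I_lang_def)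
  note fp = factor_positions[OF w]
  show ?thesis
  proof (rule that)
    show "Suc (length u) < Suc (Suc (length u + length m))" by simp
    show "Suc (Suc (length u + length m)) < length w" using fp(3) by simp
    show "w ! length u = a" using w by (simp add: nth_append)
    show "w ! Suc (length u) = x" using fp(1) by simp
    show "w ! Suc (Suc (length u + length m)) = b" using fp(2) by simp
    fix t assume "Suc (length u) < t" "t < Suc (Suc (length u + length m))"
    then show "w ! t \<noteq> a" using fp(4)[of t] m by auto
  qed
qed

lemma J_lang_positions:
  assumes "w \<in> J_lang x a b"
  obtains k l where "k < l" "l < length w" "w ! k = a" "w ! l = b"
    "\<And>t. k < t \<Longrightarrow> t < l \<Longrightarrow> w ! t \<noteq> x"
proof -
  obtain u m v where w: "w = u @ a # m @ b # v" and m: "x \<notin> set m"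
    using assms by (auto simp: J_lang_def)
  note fp = factor_positions[OF w]
  show ?thesis
  proof (rule that)
    show "length u < Suc (length u + length m)" by simp
    fix t assume "length u < t" "t < Suc (length u + length m)"
    then show "w ! t \<noteq> x" using fp(4)[of t] m by auto
  qed (use fp in auto)
qed

text \<open>The I-witness (an a followed by x) and the J-witness (an a followed by a
  letter other than x) are disjoint a-to-b blocks, so they can be swapped.\<close>

lemma obst_not_uniq:
  fixes w :: "'a::finite list"
  assumes "w \<in> L_OBST"
  shows "w \<notin> L_UNIQ"
proof -
  obtain x a b where "a \<noteq> x" "b \<noteq> x" "w \<in> I_lang x a b" "w \<in> J_lang x a b"
    using assms by (auto simp: L_OBST_def K_lang_def)
  obtain i j where ij: "Suc i < j" "j < length w" "w ! i = a" "w ! Suc i = x" "w ! j = b"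
    and no_a: "\<And>t. Suc i < t \<Longrightarrow> t < j \<Longrightarrow> w ! t \<noteq> a"
    using I_lang_positions[OF \<open>w \<in> I_lang x a b\<close>] by blast
  obtain k l where kl: "k < l" "l < length w" "w ! k = a" "w ! l = b"
    and no_x: "\<And>t. k < t \<Longrightarrow> t < l \<Longrightarrow> w ! t \<noteq> x"
    using J_lang_positions[OF \<open>w \<in> J_lang x a b\<close>] by blast
  have next_k: "w ! Suc k \<noteq> x"
    using no_x[of "Suc k"] kl \<open>b \<noteq> x\<close> by (cases "Suc k = l") auto
  consider "k < i" | "i < k" using next_k ij by fastforce
  then show ?thesis
  proof cases
    case 1
    text \<open>The J-block cannot reach position i+1, which carries x.\<close>
    have "\<not> Suc i < l" using no_x[of "Suc i"] 1 ij by auto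
    moreover have "l \<noteq> Suc i" using kl ij \<open>b \<noteq> x\<close> by auto
    ultimately have "l \<le> i" by simp
    then show ?thesis
      using swap_positions_not_uniq[of k l i j w] 1 ij kl next_k by auto
  next
    case 2
    text \<open>The J-block cannot start inside the I-block, which contains no a after i.\<close>
    have "\<not> (Suc i < k \<and> k < j)" using no_a[of k] kl by auto
    moreover have "k \<noteq> Suc i" using kl ij \<open>a \<noteq> x\<close> by auto
    ultimately have "j \<le> k" using 2 by auto
    then show ?thesis
      using swap_positions_not_uniq[of i j k l w] ij kl next_k by auto
  qed
qed

section \<open>Unobstructed strings are uniquely decodable\<close>

lemma obst_intro:
  assumes "a \<noteq> x" "b \<noteq> x"
    and "W = u @ [a, x] @ m @ [b] @ v" "a \<notin> set m"
    and "W = u' @ [a] @ m' @ [b] @ v'" "x \<notin> set m'"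
  shows "W \<in> L_OBST"
proof -
  have "W \<in> I_lang x a b" using assms(3,4) unfolding I_lang_def by blast
  moreover have "W \<in> J_lang x a b" using assms(5,6) unfolding J_lang_def by blast
  ultimately show ?thesis using assms(1,2) unfolding L_OBST_def K_lang_def by blast
qed

lemma obst_Cons: "w \<in> L_OBST \<Longrightarrow> c # w \<in> L_OBST"
proof -
  assume "w \<in> L_OBST"
  then obtain x a b where ab: "a \<noteq> x" "b \<noteq> x" and "w \<in> I_lang x a b" "w \<in> J_lang x a b"
    by (auto simp: L_OBST_def K_lang_def)
  obtain u m v where "w = u @ [a, x] @ m @ [b] @ v" "a \<notin> set m"
    using \<open>w \<in> I_lang x a b\<close> by (auto simp: I_lang_def)
  moreover obtain u' m' v' where "w = u' @ [a] @ m' @ [b] @ v'" "x \<notin> set m'"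
    using \<open>w \<in> J_lang x a b\<close> by (auto simp: J_lang_def)
  ultimately show ?thesis
    using obst_intro[of a x b "c # w" "c # u" m v "c # u'" m' v'] ab by simp
qed

definition adjacent :: "'a list \<Rightarrow> 'a \<Rightarrow> 'a \<Rightarrow> bool" where
  "adjacent w c d \<longleftrightarrow> (\<exists>p q. w = p @ c # d # q)"

lemma adjacent_Cons: "adjacent (y # w) c d \<longleftrightarrow> (c = y \<and> w \<noteq> [] \<and> hd w = d) \<or> adjacent w c d"
proof
  assume "adjacent (y # w) c d"
  then obtain p q where "y # w = p @ c # d # q" unfolding adjacent_def by blast
  then show "(c = y \<and> w \<noteq> [] \<and> hd w = d) \<or> adjacent w c d"
    unfolding adjacent_def by (cases p) auto
next
  assume "(c = y \<and> w \<noteq> [] \<and> hd w = d) \<or> adjacent w c d"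
  then show "adjacent (y # w) c d"
    unfolding adjacent_def by (metis append_Cons append_Nil list.collapse)
qed

lemma adjacent_start: "adjacent (c # d # w) c d"
  unfolding adjacent_def by (metis append_Nil)

definition rdelim :: "'a list \<Rightarrow> 'a option list" where
  "rdelim w = map Some w @ [None]"

lemma rdelim_Cons: "rdelim (y # w) = Some y # rdelim w"
  and rdelim_ne: "rdelim w \<noteq> []"
  and length_rdelim: "length (rdelim w) = Suc (length w)"
  and delim_rdelim: "delim w = None # rdelim w"
  by (simp_all add: rdelim_def delim_def)

lemma hd_rdelim: "hd (rdelim w) = (if w = [] then None else Some (hd w))"
  by (cases w) (simp_all add: rdelim_def)

lemma bigrams_rdelim_Cons: "bigrams (rdelim (y # w)) = add_mset (Some y, hd (rdelim w)) (bigrams (rdelim w))"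
  by (simp add: rdelim_Cons rdelim_ne bigrams_Cons)

lemma bigrams_rdelim_adjacent: "(Some c, Some d) \<in># bigrams (rdelim w) \<longleftrightarrow> adjacent w c d"
proof (induction w)
  case Nil
  then show ?case by (simp add: rdelim_def adjacent_def)
next
  case (Cons y w)
  then show ?case by (auto simp: bigrams_rdelim_Cons adjacent_Cons hd_rdelim)
qed

lemma bigrams_rdelim_no_None: "(None, y) \<notin># bigrams (rdelim w)"
  by (induction w) (simp_all add: bigrams_rdelim_Cons rdelim_def[of "[]"])

lemma bigrams_rdelim_eq_length:
  "bigrams (rdelim v) = bigrams (rdelim w) \<Longrightarrow> length v = length w"
  by (metis size_bigrams length_rdelim diff_Suc_1)

lemma bigrams_rdelim_eq_adjacent:
  "bigrams (rdelim v) = bigrams (rdelim w) \<Longrightarrow> adjacent v = adjacent w"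
  by (simp add: fun_eq_iff flip: bigrams_rdelim_adjacent)

lemma bigrams_delim_eq:
  assumes "bigrams (delim v) = bigrams (delim w)"
  shows "hd (rdelim v) = hd (rdelim w)" and "bigrams (rdelim v) = bigrams (rdelim w)"
proof -
  have eq: "add_mset (None, hd (rdelim v)) (bigrams (rdelim v))
      = add_mset (None, hd (rdelim w)) (bigrams (rdelim w))"
    using assms by (simp add: delim_rdelim bigrams_Cons rdelim_ne)
  then show "hd (rdelim v) = hd (rdelim w)"
    by (metis bigrams_rdelim_no_None insert_noteq_member prod.inject)
  with eq show "bigrams (rdelim v) = bigrams (rdelim w)" by simp
qed

lemma adjacent_stays_in_suffix:
  assumes "W = P @ Q" "set P \<inter> set Q = {}" "adjacent W c d" "c \<in> set Q"
  shows "d \<in> set Q"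
proof -
  obtain p q where "P @ Q = p @ c # d # q" using assms unfolding adjacent_def by blast
  then obtain us where "(P = p @ us \<and> us @ Q = c # d # q) \<or> (P @ us = p \<and> Q = us @ c # d # q)"
    using append_eq_append_conv2[of P Q p "c # d # q"] by blast
  then show ?thesis
  proof
    assume us: "P = p @ us \<and> us @ Q = c # d # q"
    then have "c \<notin> set us" using assms by auto
    with us show ?thesis by (cases us) auto
  qed auto
qed

lemma trapped_suffix:
  assumes closed: "\<And>c d. adjacent w c d \<Longrightarrow> c \<in> S \<Longrightarrow> d \<in> S"
    and "w = u @ y # v" "y \<in> S"
  shows "set v \<subseteq> S"
  using assms(2,3)
proof (induction v arbitrary: u y)
  case Nil
  then show ?case by simp
next
  case (Cons z v)
  have "z \<in> S" using closed[of y z] Cons.prems unfolding adjacent_def by blast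
  moreover have "set v \<subseteq> S" using Cons.IH[of "u @ [y]" z] Cons.prems \<open>z \<in> S\<close> by simp
  ultimately show ?case by simp
qed

text \<open>The bigram "c c" occurs: the first return of c after "c d" gives the
  I-witness, "c c" the J-witness (x = d, a = b = c).\<close>

lemma obst_loop:
  assumes "d \<noteq> c" "adjacent (c # d # w) c c"
  shows "c # d # w \<in> L_OBST"
proof -
  obtain p q where pq: "c # d # w = p @ c # c # q" using assms unfolding adjacent_def by blast
  have "c \<in> set w"
    using pq assms(1) by (cases p; cases "tl p") (auto simp: Cons_eq_append_conv)
  then obtain m r where "w = m @ c # r" "c \<notin> set m" by (meson split_list_first)
  then show ?thesis
    using obst_intro[of c d c _ "[]" m r p "[]" q] pq assms(1) by auto
qed

text \<open>"c e" occurs after the start and c occurs again afterwards: the obstruction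
  uses x = e (or x = d) with blocks from c to the next c (or to e).\<close>

lemma obst_repeated_edge:
  assumes "d \<noteq> e" "c \<noteq> e" and W: "c # d # w = p @ c # e # q" and "p \<noteq> []" "c \<in> set q"
  shows "c # d # w \<in> L_OBST"
proof -
  obtain m2 r2 where q: "q = m2 @ c # r2" "c \<notin> set m2"
    using \<open>c \<in> set q\<close> by (meson split_list_first)
  show ?thesis
  proof (cases "d = c")
    case True
    then show ?thesis
      using obst_intro[of c e c _ p m2 r2 "[]" "[]" w] assms q by auto
  next
    case False
    obtain p' where p: "p = c # d # p'"
      using W \<open>p \<noteq> []\<close> False by (cases p; cases "tl p") (auto simp: Cons_eq_append_conv)
    then have "c \<in> set w" using W by auto
    then obtain m r where w: "w = m @ c # r" "c \<notin> set m" by (meson split_list_first)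
    show ?thesis
    proof (cases "e \<in> set m")
      case True
      then obtain m1 m3 where "m = m1 @ e # m3" by (meson split_list)
      then show ?thesis
        using obst_intro[of c d e _ "[]" m1 "m3 @ c # r" p "[]" q] w W False assms(1) by auto
    next
      case e_notin: False
      show ?thesis
        using obst_intro[of c e c _ p m2 r2 "[]" "d # m" r] w W q e_notin assms(1,2) by auto
    qed
  qed
qed

text \<open>"c e" occurs after the start, c never returns, but some letter u before
  the occurrence reappears in e # q: a block from the last earlier c to u is
  matched against the block starting with "c e".\<close>

lemma obst_shared_letter:
  assumes "d \<noteq> e" "c \<noteq> e" and W: "c # d # w = p @ c # e # q" and "p \<noteq> []"
    and "c \<notin> set q" "u \<in> set p" "u \<in> set (e # q)"
  shows "c # d # w \<in> L_OBST"
proof -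
  have "u \<noteq> c" using assms by auto
  obtain p' where p: "p = c # p'" using W \<open>p \<noteq> []\<close> by (cases p) auto
  then obtain y1 y2 where "p' = y1 @ u # y2" using assms \<open>u \<noteq> c\<close> by (auto dest: split_list)
  moreover obtain \<alpha> m where last_c: "c # y1 = \<alpha> @ c # m" "c \<notin> set m"
    by (metis list.set_intros(1) split_list_last)
  ultimately have W': "c # d # w = \<alpha> @ c # (m @ [u]) @ y2 @ c # e # q" using W p by simp
  have c_notin: "c \<notin> set (m @ [u])" using last_c \<open>u \<noteq> c\<close> by simp
  show ?thesis
  proof (cases "e \<in> set (m @ [u])")
    case True
    then obtain m1 m2 where mu: "m @ [u] = m1 @ e # m2" "e \<notin> set m1" by (meson split_list_first)
    show ?thesis
    proof (cases m1)
      case Nil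
      then have W'': "c # d # w = \<alpha> @ c # e # (m2 @ y2 @ c # e # q)" using W' mu by simp
      then have "\<alpha> \<noteq> []" using \<open>d \<noteq> e\<close> by auto
      then show ?thesis using obst_repeated_edge[OF assms(1,2) W''] by simp
    next
      case (Cons t m1')
      then show ?thesis
        using obst_intro[of c t e _ \<alpha> m1' "m2 @ y2 @ c # e # q" p "[]" q] mu c_notin W' W by auto
    qed
  next
    case False
    then have "u \<in> set q" using assms(7) by auto
    then obtain \<gamma> \<delta> where "q = \<gamma> @ u # \<delta>" by (meson split_list)
    then show ?thesis
      using obst_intro[of c e u _ p \<gamma> \<delta> \<alpha> m "y2 @ c # e # q"] False assms W W' by auto
  qed
qed

lemma first_divergence_obstructed:
  assumes adj: "adjacent (c # e # v) = adjacent (c # d # w)" and "d \<noteq> e"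
  shows "c # d # w \<in> L_OBST"
proof -
  have "adjacent (c # d # w) c e" using adj adjacent_start[of c e v] by simp
  then obtain p q where W: "c # d # w = p @ c # e # q" unfolding adjacent_def by blast
  have "p \<noteq> []" using W \<open>d \<noteq> e\<close> by auto
  consider "e = c" | "c \<noteq> e" "c \<in> set q" | "c \<noteq> e" "c \<notin> set q" "set p \<inter> set (e # q) \<noteq> {}"
    | "c \<noteq> e" "c \<notin> set q" "set p \<inter> set (e # q) = {}"
    by blast
  then show ?thesis
  proof cases
    case 1
    then show ?thesis using obst_loop \<open>d \<noteq> e\<close> \<open>adjacent (c # d # w) c e\<close> by simp
  next
    case 2
    then show ?thesis using obst_repeated_edge[OF \<open>d \<noteq> e\<close> _ W \<open>p \<noteq> []\<close>] by blast
  next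
    case 3
    then obtain u where "u \<in> set p" "u \<in> set (e # q)" by blast
    then show ?thesis using obst_shared_letter[OF \<open>d \<noteq> e\<close> _ W \<open>p \<noteq> []\<close>] 3 by blast
  next
    case 4
    text \<open>Once c # d # w enters the letters of e # q it stays there; so does c # e # v,
      which therefore never returns to c and cannot contain the bigram "c d".\<close>
    define Q where "Q = set (e # q)"
    have "c \<notin> Q" using 4 by (simp add: Q_def)
    have split: "c # d # w = (p @ [c]) @ (e # q)" and disjoint: "set (p @ [c]) \<inter> set (e # q) = {}"
      using W 4 by auto
    have "d' \<in> Q" if "adjacent (c # e # v) c' d'" "c' \<in> Q" for c' d'
      using adjacent_stays_in_suffix[OF split disjoint] that adj by (simp add: Q_def)
    then have "set v \<subseteq> Q"
      by (rule trapped_suffix[where u = "[c]" and y = e]) (simp_all add: Q_def)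
    then have c_notin: "c \<notin> set (e # v)" using \<open>c \<notin> Q\<close> by (auto simp: Q_def)
    have "adjacent (c # e # v) c d" using adj adjacent_start[of c d w] by simp
    then obtain p' q' where "c # e # v = p' @ c # d # q'" unfolding adjacent_def by blast
    then show ?thesis using c_notin \<open>d \<noteq> e\<close> by (cases p') auto
  qed
qed

lemma not_obst_determined:
  assumes "bigrams (rdelim (c # w)) = bigrams (rdelim (c # v))" "c # w \<notin> L_OBST"
  shows "w = v"
  using assms
proof (induction w arbitrary: c v)
  case Nil
  then show ?case using bigrams_rdelim_eq_length by fastforce
next
  case (Cons d w)
  obtain e v' where v: "v = e # v'"
    using bigrams_rdelim_eq_length[OF Cons.prems(1)] by (cases v) auto
  show ?case
  proof (cases "d = e")
    case True
    have "bigrams (rdelim (d # w)) = bigrams (rdelim (d # v'))"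
      using Cons.prems(1) True v by (simp add: bigrams_rdelim_Cons rdelim_Cons)
    moreover have "d # w \<notin> L_OBST" using Cons.prems(2) obst_Cons by blast
    ultimately show ?thesis using Cons.IH True v by blast
  next
    case False
    then have "c # d # w \<in> L_OBST"
      using first_divergence_obstructed bigrams_rdelim_eq_adjacent[OF Cons.prems(1)] v by metis
    with Cons.prems(2) show ?thesis by contradiction
  qed
qed

lemma not_obst_uniq:
  fixes w :: "'a::finite list"
  assumes "w \<notin> L_OBST"
  shows "w \<in> L_UNIQ"
  unfolding L_UNIQ_def
proof (intro CollectI allI impI, elim conjE exE)
  fix z v
  assume z: "z = delim v" and "bigram z = bigram (delim w)"
  then have "bigrams (delim v) = bigrams (delim w)" by (simp add: bigram_eq_iff_bigrams)
  note hd_eq = bigrams_delim_eq(1)[OF this] and rest_eq = bigrams_delim_eq(2)[OF this]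
  have "v = w"
  proof (cases w)
    case Nil
    then show ?thesis using bigrams_rdelim_eq_length[OF rest_eq] by simp
  next
    case (Cons c w')
    then obtain v' where v: "v = c # v'" using hd_eq by (cases v) (auto simp: hd_rdelim)
    then show ?thesis using not_obst_determined rest_eq assms Cons by metis
  qed
  then show "z = delim w" using z by simp
qed

theorem theorem2:
  shows "(L_UNIQ :: ('a::finite) list set) = UNIV - L_OBST"
  using obst_not_uniq not_obst_uniq by blast

end
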